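(* Let $k\ge1$, $G=(V,E)$ an inductively $k$-independent graph with $k$-independence ordering $v_1,\dots,v_n$, $f:2^V\to\mathbb{R}_{\ge0}$ submodular (not necessarily monotone) with $f(\emptyset)=0$, and $\beta>0$. The algorithm RANDOMIZED-PREEMPTIVE-GREEDY (described in the context) returns an independent set $S_{\mathrm{out}}$ of $G$ such that for every independent set $T$ of $G$, \[ f(T)\le 4\big(k(1+\beta)+1\big)\big(1+\beta^{-1}\big)\,\mathbb{E}[f(S_{\mathrm{out}})]. \]
   Context: $N(v)$ is the neighbourhood of $v$ (excluding $v$); $G$ is inductively $k$-independent with $k$-independence ordering $v_1,\dots,v_n$ if for every $i$, $G[N(v_i)\cap\{v_i,\dots,v_n\}]$ has no independent set of size more than $k$. For a graph with vertex ordering $u_1<\dots<u_m$ and $S$ a vertex set: $f_S(v)=f(S\cup\{v\})-f(S)$ and $\nu_f(S,u)=f_{S'}(u)$ with $S'=\{s\in S:s<u\}$. PREEMPTIVE-GREEDY on such an ordered graph (parameter $\beta$): start with $S=\emptyset$; for each vertex $v$ in order: let $C=N(v)\cap S$; if $f_S(v)\ge(1+\beta)\sum_{u\in C}\nu_f(S,u)$, replace $S$ by $(S\setminus C)\cup\{v\}$; return final $S$. RANDOMIZED-PREEMPTIVE-GREEDY: let $V'\subseteq V$ contain each vertex independently with probability $1/2$, and return the output of PREEMPTIVE-GREEDY run on the induced subgraph $G[V']$ with the ordering inherited from $v_1,\dots,v_n$, with $f$ restricted to subsets of $V'$, and parameter $\beta$. *)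

theory Defs
  imports Complex_Main
begin

text \<open>Graphs: vertex set V, symmetric irreflexive edge relation E.
  Vertex orderings are given by distinct lists.\<close>

definition indep_set :: "('a \<Rightarrow> 'a \<Rightarrow> bool) \<Rightarrow> 'a set \<Rightarrow> bool" where
  "indep_set E I \<longleftrightarrow> (\<forall>u\<in>I. \<forall>w\<in>I. \<not> E u w)"

definition nbhd :: "'a set \<Rightarrow> ('a \<Rightarrow> 'a \<Rightarrow> bool) \<Rightarrow> 'a \<Rightarrow> 'a set" where
  "nbhd V E v = {u \<in> V. E v u \<and> u \<noteq> v}"

definition inductively_k_independent ::
  "nat \<Rightarrow> ('a \<Rightarrow> 'a \<Rightarrow> bool) \<Rightarrow> 'a list \<Rightarrow> bool" where
  "inductively_k_independent k E vs \<longleftrightarrow>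
     (\<forall>i < length vs. \<forall>I. I \<subseteq> nbhd (set vs) E (vs ! i) \<inter> set (drop i vs)
        \<and> indep_set E I \<longrightarrow> card I \<le> k)"

definition submodular_on :: "'a set \<Rightarrow> ('a set \<Rightarrow> real) \<Rightarrow> bool" where
  "submodular_on V f \<longleftrightarrow>
     (\<forall>A B. A \<subseteq> V \<longrightarrow> B \<subseteq> V \<longrightarrow> f (A \<union> B) + f (A \<inter> B) \<le> f A + f B)"

definition before :: "'a list \<Rightarrow> 'a \<Rightarrow> 'a \<Rightarrow> bool" where
  "before xs a b \<longleftrightarrow> (\<exists>i j. i < j \<and> j < length xs \<and> xs ! i = a \<and> xs ! j = b)"

definition marg :: "('a set \<Rightarrow> real) \<Rightarrow> 'a set \<Rightarrow> 'a \<Rightarrow> real" where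
  "marg f S v = f (S \<union> {v}) - f S"

definition nu :: "'a list \<Rightarrow> ('a set \<Rightarrow> real) \<Rightarrow> 'a set \<Rightarrow> 'a \<Rightarrow> real" where
  "nu xs f S u = marg f {s \<in> S. before xs s u} u"

definition pg_step ::
  "('a \<Rightarrow> 'a \<Rightarrow> bool) \<Rightarrow> ('a set \<Rightarrow> real) \<Rightarrow> real \<Rightarrow> 'a list \<Rightarrow> 'a set \<Rightarrow> 'a \<Rightarrow> 'a set" where
  "pg_step E f \<beta> xs S v =
     (let C = nbhd (set xs) E v \<inter> S in
      if marg f S v \<ge> (1 + \<beta>) * (\<Sum>u\<in>C. nu xs f S u) then (S - C) \<union> {v} else S)"

definition preemptive_greedy ::
  "('a \<Rightarrow> 'a \<Rightarrow> bool) \<Rightarrow> ('a set \<Rightarrow> real) \<Rightarrow> real \<Rightarrow> 'a list \<Rightarrow> 'a set" where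
  "preemptive_greedy E f \<beta> xs = fold (\<lambda>v S. pg_step E f \<beta> xs S v) xs {}"

text \<open>Output of RANDOMIZED-PREEMPTIVE-GREEDY for the sample V' (the induced subgraph
  G[V'] with inherited ordering).\<close>
definition rpg_run ::
  "('a \<Rightarrow> 'a \<Rightarrow> bool) \<Rightarrow> ('a set \<Rightarrow> real) \<Rightarrow> real \<Rightarrow> 'a list \<Rightarrow> 'a set \<Rightarrow> 'a set" where
  "rpg_run E f \<beta> vs V' = preemptive_greedy E f \<beta> (filter (\<lambda>v. v \<in> V') vs)"

text \<open>Expected value of f(S_out): V' contains each vertex independently with
  probability 1/2, i.e. V' is uniform over all subsets of V.\<close>
definition rpg_expected_value ::
  "('a \<Rightarrow> 'a \<Rightarrow> bool) \<Rightarrow> ('a set \<Rightarrow> real) \<Rightarrow> real \<Rightarrow> 'a list \<Rightarrow> real" where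
  "rpg_expected_value E f \<beta> vs =
     (\<Sum>V'\<in>Pow (set vs). f (rpg_run E f \<beta> vs V')) / 2 ^ length vs"

end

theory Submission
  imports Defs
begin

(*
  Fix the sample V' and an independent set T, and let A be the set of all vertices that
  PREEMPTIVE-GREEDY ever accepts on G[V'].  A charging argument bounds f (A \<union> (T \<inter> V')) by
  (k (1 + \<beta>) + 1) (1 + 1/\<beta>) f S_out.  Replacing the conflict set C by v raises f S by at
  least the gain of v minus \<sigma> = \<Sum>u\<in>C. \<nu>(S, u), because by submodularity the \<nu>-values of
  the surviving vertices can only grow; as the gain is at least (1 + \<beta>) \<sigma>, this increase
  pays both for the gain (factor 1 + 1/\<beta>) and for the charges held by the evicted vertices.
  A rejected vertex of T has gain below (1 + \<beta>) times the \<nu>-values of its earlier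
  neighbours in S and is charged to them.  The later neighbours of a vertex that lie in T
  form an independent set, so every vertex is charged at most k times, and the \<nu>-values of
  S sum to f S.

  Averaging over V' costs a factor 2 twice: pairing V' with its symmetric difference with T
  gives E f (T \<inter> V') \<ge> f T / 2, and pairing it with its symmetric difference with V - T,
  which has the same T-part and a disjoint set of accepted vertices outside T, gives
  E f ((A - T) \<union> (T \<inter> V')) \<ge> E f (T \<inter> V') / 2, by submodularity and nonnegativity.
*)

lemma before_Nil [simp]: "\<not> before [] a b"
  by (simp add: before_def)

lemma before_Cons: "before (x # xs) a b \<longleftrightarrow> (a = x \<and> b \<in> set xs) \<or> before xs a b"
proof
  assume "before (x # xs) a b"
  then obtain i j where ij: "i < j" "j < Suc (length xs)" "(x # xs) ! i = a" "(x # xs) ! j = b"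
    by (auto simp: before_def)
  then obtain j' where j: "j = Suc j'"
    by (cases j) auto
  show "(a = x \<and> b \<in> set xs) \<or> before xs a b"
  proof (cases i)
    case 0
    then show ?thesis using ij j by auto
  next
    case (Suc i')
    then have "before xs a b"
      unfolding before_def using ij j by (intro exI[of _ i'] exI[of _ j']) auto
    then show ?thesis ..
  qed
next
  assume "(a = x \<and> b \<in> set xs) \<or> before xs a b"
  then show "before (x # xs) a b"
  proof
    assume "a = x \<and> b \<in> set xs"
    then obtain j where "j < length xs" "xs ! j = b" "a = x"
      by (auto simp: in_set_conv_nth)
    then show ?thesis
      unfolding before_def by (intro exI[of _ 0] exI[of _ "Suc j"]) auto
  next
    assume "before xs a b"
    then obtain i j where "i < j" "j < length xs" "xs ! i = a" "xs ! j = b"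
      by (auto simp: before_def)
    then show ?thesis
      unfolding before_def by (intro exI[of _ "Suc i"] exI[of _ "Suc j"]) auto
  qed
qed

lemma before_in_set: "before xs a b \<Longrightarrow> a \<in> set xs \<and> b \<in> set xs"
  by (induct xs) (auto simp: before_Cons)

lemma before_filterD: "before (filter P xs) a b \<Longrightarrow> before xs a b"
  by (induct xs) (auto simp: before_Cons split: if_splits)

lemma before_irrefl: "distinct xs \<Longrightarrow> \<not> before xs a a"
  by (induct xs) (auto simp: before_Cons)

lemma before_asym: "distinct xs \<Longrightarrow> before xs a b \<Longrightarrow> \<not> before xs b a"
  by (induct xs) (auto simp: before_Cons dest: before_in_set)

lemma before_append_Cons_iff:
  "distinct (ys @ x # zs) \<Longrightarrow> before (ys @ x # zs) s x \<longleftrightarrow> s \<in> set ys"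
  by (induct ys) (auto simp: before_Cons dest: before_in_set)

lemma before_nth_iff:
  "distinct xs \<Longrightarrow> i < length xs \<Longrightarrow> before xs (xs ! i) t \<longleftrightarrow> t \<in> set (drop (Suc i) xs)"
proof (induct xs arbitrary: i)
  case (Cons x xs)
  then show ?case
    by (cases i) (auto simp: before_Cons dest: before_in_set)
qed simp

lemma later_nbhd_eq:
  assumes "distinct xs" "i < length xs"
  shows "nbhd (set xs) E (xs ! i) \<inter> set (drop i xs) = {t. E (xs ! i) t \<and> before xs (xs ! i) t}"
proof -
  have "set (drop i xs) = insert (xs ! i) (set (drop (Suc i) xs))"
    using assms(2) by (simp flip: Cons_nth_drop_Suc)
  moreover have "xs ! i \<notin> set (drop (Suc i) xs)"
    using assms by (metis before_irrefl before_nth_iff)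
  ultimately show ?thesis
    using assms by (auto simp: nbhd_def before_nth_iff dest: in_set_dropD)
qed

lemma inductively_k_independent_iff:
  assumes "distinct xs"
  shows "inductively_k_independent k E xs \<longleftrightarrow>
    (\<forall>u I. I \<subseteq> {t. E u t \<and> before xs u t} \<and> indep_set E I \<longrightarrow> card I \<le> k)"
proof
  assume ind: "inductively_k_independent k E xs"
  show "\<forall>u I. I \<subseteq> {t. E u t \<and> before xs u t} \<and> indep_set E I \<longrightarrow> card I \<le> k"
  proof (intro allI impI)
    fix u I
    assume I: "I \<subseteq> {t. E u t \<and> before xs u t} \<and> indep_set E I"
    show "card I \<le> k"
    proof (cases "I = {}")
      case False
      then obtain t where "before xs u t" using I by blast
      then obtain i where "i < length xs" "u = xs ! i"
        by (metis before_in_set in_set_conv_nth)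
      then show ?thesis
        using ind I assms later_nbhd_eq[of xs i E]
        unfolding inductively_k_independent_def by auto
    qed simp
  qed
next
  assume "\<forall>u I. I \<subseteq> {t. E u t \<and> before xs u t} \<and> indep_set E I \<longrightarrow> card I \<le> k"
  then show "inductively_k_independent k E xs"
    using assms later_nbhd_eq[of xs _ E] unfolding inductively_k_independent_def by auto
qed

lemma inductively_k_independent_filter:
  assumes "distinct xs" "inductively_k_independent k E xs"
  shows "inductively_k_independent k E (filter P xs)"
proof -
  have "{t. E u t \<and> before (filter P xs) u t} \<subseteq> {t. E u t \<and> before xs u t}" for u
    by (auto dest: before_filterD)
  then show ?thesis
    using assms inductively_k_independent_iff[of xs] inductively_k_independent_iff[of "filter P xs"]
    by (meson distinct_filter order_trans)
qed

lemma submodular_on_subset: "submodular_on V f \<Longrightarrow> W \<subseteq> V \<Longrightarrow> submodular_on W f"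
  unfolding submodular_on_def by (meson order_trans)

lemma marg_antimono:
  assumes "submodular_on V f" "X \<subseteq> Y" "Y \<subseteq> V" "u \<in> V" "u \<notin> Y"
  shows "marg f Y u \<le> marg f X u"
proof -
  have "insert u X \<subseteq> V"
    using assms by auto
  then have "f (insert u X \<union> Y) + f (insert u X \<inter> Y) \<le> f (insert u X) + f Y"
    using assms(1,3) unfolding submodular_on_def by blast
  moreover have "insert u X \<union> Y = insert u Y" "insert u X \<inter> Y = X"
    using assms by auto
  ultimately show ?thesis
    unfolding marg_def by simp
qed

lemma f_eq_sum_nu:
  assumes "f {} = 0" "distinct xs" "S \<subseteq> set xs"
  shows "f S = (\<Sum>u\<in>S. nu xs f S u)"
proof -
  have "f (S \<inter> set ys) = (\<Sum>u\<in>S \<inter> set ys. nu xs f S u)" if "xs = ys @ zs" for ys zs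
    using that
  proof (induct ys arbitrary: zs rule: rev_induct)
    case (snoc x ys)
    then have xs: "xs = ys @ x # zs"
      by simp
    have IH: "f (S \<inter> set ys) = (\<Sum>u\<in>S \<inter> set ys. nu xs f S u)"
      using snoc xs by simp
    show ?case
    proof (cases "x \<in> S")
      case True
      have "{s \<in> S. before xs s x} = S \<inter> set ys"
        using assms(2) xs before_append_Cons_iff[of ys x zs] by auto
      then have "f (insert x (S \<inter> set ys)) = f (S \<inter> set ys) + nu xs f S x"
        by (simp add: nu_def marg_def)
      moreover have "x \<notin> S \<inter> set ys"
        using assms(2) xs by auto
      ultimately show ?thesis
        using True IH by (simp add: Int_insert_right)
    next
      case False
      then show ?thesis
        using IH by (simp add: Int_insert_right)
    qed
  qed (simp add: assms(1))
  from this[of xs "[]"] show ?thesis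
    using assms(3) by (simp add: Int_absorb2)
qed

lemma pg_step_indep:
  assumes "\<And>u v. E u v \<Longrightarrow> E v u" "\<And>v. \<not> E v v"
    and "S \<subseteq> set xs" "indep_set E S" "v \<in> set xs"
  shows "pg_step E f \<beta> xs S v \<subseteq> set xs \<and> indep_set E (pg_step E f \<beta> xs S v)"
proof -
  let ?C = "nbhd (set xs) E v \<inter> S"
  have "\<not> E v w" if "w \<in> S - ?C" for w
    using that assms(2,3,5) by (auto simp: nbhd_def)
  then have "indep_set E (insert v (S - ?C))"
    using assms(1,2,4) unfolding indep_set_def by blast
  then show ?thesis
    using assms(3,4,5) unfolding pg_step_def Let_def by auto
qed

lemma preemptive_greedy_indep:
  assumes "\<And>u v. E u v \<Longrightarrow> E v u" "\<And>v. \<not> E v v"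
  shows "preemptive_greedy E f \<beta> xs \<subseteq> set xs \<and> indep_set E (preemptive_greedy E f \<beta> xs)"
proof -
  have "fold (\<lambda>v S. pg_step E f \<beta> xs S v) ys S \<subseteq> set xs
      \<and> indep_set E (fold (\<lambda>v S. pg_step E f \<beta> xs S v) ys S)"
    if "set ys \<subseteq> set xs" "S \<subseteq> set xs" "indep_set E S" for ys S
    using that
  proof (induct ys arbitrary: S)
    case (Cons v ys)
    then show ?case
      using pg_step_indep[of E, OF assms, where S = S and v = v] by simp
  qed simp
  from this[of xs "{}"] show ?thesis
    unfolding preemptive_greedy_def by (simp add: indep_set_def)
qed

lemma preemption_increment_bounds:
  fixes \<beta> \<sigma> g \<Delta> :: real
  assumes "\<beta> > 0" "(1 + \<beta>) * \<sigma> \<le> g" "g - \<sigma> \<le> \<Delta>"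
  shows "g \<le> (1 + 1 / \<beta>) * \<Delta>" "(1 + \<beta>) * \<sigma> \<le> (1 + 1 / \<beta>) * \<Delta>"
proof -
  have le: "(1 + 1 / \<beta>) * (g - \<sigma>) \<le> (1 + 1 / \<beta>) * \<Delta>"
    using assms by (intro mult_left_mono) auto
  have "(1 + 1 / \<beta>) * (g - \<sigma>) = g + (g - (1 + \<beta>) * \<sigma>) / \<beta>"
    using assms(1) by (simp add: field_simps)
  moreover have "0 \<le> (g - (1 + \<beta>) * \<sigma>) / \<beta>"
    using assms(1,2) by simp
  ultimately show "g \<le> (1 + 1 / \<beta>) * \<Delta>"
    using le by linarith
  have "(1 + 1 / \<beta>) * (g - \<sigma>) = (1 + \<beta>) * \<sigma> + (1 + 1 / \<beta>) * (g - (1 + \<beta>) * \<sigma>)"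
    using assms(1) by (simp add: field_simps)
  moreover have "0 \<le> (1 + 1 / \<beta>) * (g - (1 + \<beta>) * \<sigma>)"
    using assms(1,2) by simp
  ultimately show "(1 + \<beta>) * \<sigma> \<le> (1 + 1 / \<beta>) * \<Delta>"
    using le by linarith
qed

locale pg_analysis =
  fixes E :: "'a \<Rightarrow> 'a \<Rightarrow> bool" and xs :: "'a list" and f :: "'a set \<Rightarrow> real"
    and k :: nat and \<beta> :: real and T :: "'a set"
  assumes E_sym: "\<And>u v. E u v \<Longrightarrow> E v u"
    and xs_distinct: "distinct xs"
    and k_indep: "inductively_k_independent k E xs"
    and submod: "submodular_on (set xs) f"
    and f_empty: "f {} = 0"
    and \<beta>_pos: "\<beta> > 0"
    and T_subset: "T \<subseteq> set xs"
    and T_indep: "indep_set E T"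
begin

(*
  A rejected vertex t \<in> T is charged to each earlier neighbour u in the current solution,
  with weight (1 + \<beta>) \<nu>(S, u); charge P u bounds the number of such t among the processed
  vertices P.
*)
definition charge :: "'a set \<Rightarrow> 'a \<Rightarrow> nat" where
  "charge P u = card {t \<in> T \<inter> P. E u t \<and> before xs u t}"

definition potential :: "'a set \<Rightarrow> 'a set \<Rightarrow> real" where
  "potential P S = (1 + 1 / \<beta>) * (real k + 1) * f S
     + (1 + \<beta>) * (\<Sum>u\<in>S. real (charge P u) * nu xs f S u)"

(* P is the processed prefix of xs, S the current solution and A the set of all vertices
   accepted so far. *)
definition charging_inv :: "'a set \<Rightarrow> 'a set \<Rightarrow> 'a set \<Rightarrow> bool" where
  "charging_inv P S A \<longleftrightarrow> S \<subseteq> A \<and> A \<subseteq> P \<and> (\<forall>u\<in>S. 0 \<le> nu xs f S u)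
     \<and> f (A \<union> (T \<inter> P)) \<le> potential P S"

lemma charge_mono: "P \<subseteq> Q \<Longrightarrow> charge P u \<le> charge Q u"
  unfolding charge_def using T_subset by (intro card_mono) (auto intro: finite_subset)

lemma charge_le_k: "charge P u \<le> k"
proof -
  have "indep_set E {t \<in> T \<inter> P. E u t \<and> before xs u t}"
    using T_indep by (auto simp: indep_set_def)
  then show ?thesis
    unfolding charge_def using k_indep inductively_k_independent_iff[OF xs_distinct]
    by (metis (no_types, lifting) mem_Collect_eq subsetI)
qed

lemma charge_insert:
  assumes "v \<in> T" "v \<notin> P" "E u v" "before xs u v"
  shows "charge (insert v P) u = Suc (charge P u)"
proof -
  have "{t \<in> T \<inter> insert v P. E u t \<and> before xs u t} = insert v {t \<in> T \<inter> P. E u t \<and> before xs u t}"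
    using assms by auto
  moreover have "finite {t \<in> T \<inter> P. E u t \<and> before xs u t}"
    using T_subset by (auto intro: finite_subset)
  ultimately show ?thesis
    unfolding charge_def using assms(2) by simp
qed

lemma potential_mono:
  assumes "P \<subseteq> Q" "\<forall>u\<in>S. 0 \<le> nu xs f S u"
  shows "potential P S \<le> potential Q S"
proof -
  have "(\<Sum>u\<in>S. real (charge P u) * nu xs f S u) \<le> (\<Sum>u\<in>S. real (charge Q u) * nu xs f S u)"
    using assms charge_mono by (intro sum_mono mult_right_mono) auto
  then show ?thesis
    unfolding potential_def using \<beta>_pos by simp
qed

lemma potential_le:
  assumes "S \<subseteq> set xs" "\<forall>u\<in>S. 0 \<le> nu xs f S u"
  shows "potential P S \<le> (real k * (1 + \<beta>) + 1) * (1 + 1 / \<beta>) * f S"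
proof -
  have "(\<Sum>u\<in>S. real (charge P u) * nu xs f S u) \<le> (\<Sum>u\<in>S. real k * nu xs f S u)"
    using assms(2) charge_le_k by (intro sum_mono mult_right_mono) auto
  also have "\<dots> = real k * f S"
    using f_eq_sum_nu[of f, OF f_empty xs_distinct assms(1)] by (simp add: sum_distrib_left)
  finally have "(1 + \<beta>) * (\<Sum>u\<in>S. real (charge P u) * nu xs f S u) \<le> (1 + \<beta>) * (real k * f S)"
    using \<beta>_pos by (intro mult_left_mono) auto
  moreover have "(real k * (1 + \<beta>) + 1) * (1 + 1 / \<beta>) * f S
      = (1 + 1 / \<beta>) * (real k + 1) * f S + (1 + \<beta>) * (real k * f S)"
    using \<beta>_pos by (simp add: field_simps)
  ultimately show ?thesis
    unfolding potential_def by linarith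
qed

lemma nu_swap_mono:
  assumes "xs = ys @ v # zs" "S \<subseteq> set ys" "u \<in> S - C"
  shows "nu xs f S u \<le> nu xs f (insert v (S - C)) u"
proof -
  have "before xs u v"
    using assms xs_distinct before_append_Cons_iff[of ys v zs] by auto
  then have "{s \<in> insert v (S - C). before xs s u} = {s \<in> S - C. before xs s u}"
    using before_asym[OF xs_distinct] by auto
  moreover have "marg f {s \<in> S. before xs s u} u \<le> marg f {s \<in> S - C. before xs s u} u"
    using assms(3) before_irrefl[OF xs_distinct, of u] \<open>before xs u v\<close>
    by (intro marg_antimono[OF submod]) (auto dest: before_in_set)
  ultimately show ?thesis
    by (simp add: nu_def)
qed

lemma marg_le_nu_swap:
  assumes "xs = ys @ v # zs" "S \<subseteq> set ys"
  shows "marg f S v \<le> nu xs f (insert v (S - C)) v"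
proof -
  have "{s \<in> insert v (S - C). before xs s v} = S - C"
    using assms xs_distinct before_append_Cons_iff[of ys v zs] before_irrefl[OF xs_distinct]
    by auto
  moreover have "marg f S v \<le> marg f (S - C) v"
    using assms xs_distinct by (intro marg_antimono[OF submod]) auto
  ultimately show ?thesis
    by (simp add: nu_def)
qed

lemma f_swap_ge:
  assumes "xs = ys @ v # zs" "S \<subseteq> set ys" "C \<subseteq> S"
  shows "f S + marg f S v - (\<Sum>u\<in>C. nu xs f S u) \<le> f (insert v (S - C))"
proof -
  have fin: "finite S"
    using assms(2) finite_subset by blast
  have v: "v \<notin> S"
    using assms xs_distinct by auto
  have "f S = (\<Sum>u\<in>S. nu xs f S u)"
    using assms by (intro f_eq_sum_nu[of f, OF f_empty xs_distinct]) auto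
  also have "\<dots> = (\<Sum>u\<in>S - C. nu xs f S u) + (\<Sum>u\<in>C. nu xs f S u)"
    by (rule sum.subset_diff[OF assms(3) fin])
  finally have "f S = (\<Sum>u\<in>S - C. nu xs f S u) + (\<Sum>u\<in>C. nu xs f S u)" .
  moreover have "f (insert v (S - C)) = nu xs f (insert v (S - C)) v
      + (\<Sum>u\<in>S - C. nu xs f (insert v (S - C)) u)"
    using f_eq_sum_nu[of f, OF f_empty xs_distinct, of "insert v (S - C)"] assms fin v by auto
  moreover have "(\<Sum>u\<in>S - C. nu xs f S u) \<le> (\<Sum>u\<in>S - C. nu xs f (insert v (S - C)) u)"
    using nu_swap_mono[OF assms(1,2)] by (intro sum_mono)
  ultimately show ?thesis
    using marg_le_nu_swap[OF assms(1,2), of C] by linarith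
qed

lemma charging_inv_insert_le:
  assumes "xs = ys @ v # zs" "charging_inv (set ys) S A"
  shows "f (insert v (A \<union> (T \<inter> set ys))) \<le> f (A \<union> (T \<inter> set ys)) + marg f S v"
proof -
  have "marg f (A \<union> (T \<inter> set ys)) v \<le> marg f S v"
    using assms xs_distinct T_subset unfolding charging_inv_def
    by (intro marg_antimono[OF submod]) auto
  then show ?thesis
    by (simp add: marg_def)
qed

lemma sum_charge_accept_le:
  assumes xs: "xs = ys @ v # zs" and S: "S \<subseteq> set ys" "\<forall>u\<in>S. 0 \<le> nu xs f S u"
    and CS: "C \<subseteq> S" and S': "\<forall>u\<in>insert v (S - C). 0 \<le> nu xs f (insert v (S - C)) u"
  shows "(\<Sum>u\<in>S. real (charge (set ys) u) * nu xs f S u)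
    \<le> real k * (\<Sum>u\<in>C. nu xs f S u)
      + (\<Sum>u\<in>insert v (S - C). real (charge (insert v (set ys)) u) * nu xs f (insert v (S - C)) u)"
proof -
  let ?S' = "insert v (S - C)" and ?P' = "insert v (set ys)"
  have fin: "finite S"
    using S(1) finite_subset by blast
  have "(\<Sum>u\<in>C. real (charge (set ys) u) * nu xs f S u) \<le> (\<Sum>u\<in>C. real k * nu xs f S u)"
    using S(2) CS charge_le_k by (intro sum_mono mult_right_mono) auto
  moreover have "(\<Sum>u\<in>S - C. real (charge (set ys) u) * nu xs f S u)
      \<le> (\<Sum>u\<in>S - C. real (charge ?P' u) * nu xs f ?S' u)"
    using S(2) nu_swap_mono[OF xs S(1)] charge_mono[of "set ys" ?P']
    by (intro sum_mono mult_mono) auto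
  moreover have "(\<Sum>u\<in>S - C. real (charge ?P' u) * nu xs f ?S' u)
      \<le> (\<Sum>u\<in>?S'. real (charge ?P' u) * nu xs f ?S' u)"
    using fin S' by (intro sum_mono2) auto
  ultimately show ?thesis
    unfolding sum.subset_diff[OF CS fin] by (simp add: sum_distrib_left)
qed

lemma charging_inv_accept:
  assumes xs: "xs = ys @ v # zs" and inv: "charging_inv (set ys) S A"
    and C: "C = nbhd (set xs) E v \<inter> S"
    and accept: "(1 + \<beta>) * (\<Sum>u\<in>C. nu xs f S u) \<le> marg f S v"
  shows "charging_inv (insert v (set ys)) (insert v (S - C)) (insert v A)"
proof -
  define \<sigma> where "\<sigma> = (\<Sum>u\<in>C. nu xs f S u)"
  define S' where "S' = insert v (S - C)"
  define P' where "P' = insert v (set ys)"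
  let ?gain = "marg f S v"
  have S: "S \<subseteq> set ys" "\<forall>u\<in>S. 0 \<le> nu xs f S u"
    and bound: "f (A \<union> (T \<inter> set ys)) \<le> potential (set ys) S"
    using inv by (auto simp: charging_inv_def)
  have CS: "C \<subseteq> S"
    using C by blast
  have "0 \<le> (1 + \<beta>) * \<sigma>"
    unfolding \<sigma>_def using S(2) CS \<beta>_pos by (intro mult_nonneg_nonneg sum_nonneg) auto
  then have gain_nonneg: "0 \<le> ?gain"
    using accept unfolding \<sigma>_def by linarith
  have nu_S': "\<forall>u\<in>S'. 0 \<le> nu xs f S' u"
    using nu_swap_mono[OF xs S(1), of _ C] marg_le_nu_swap[OF xs S(1), of C] S(2) gain_nonneg
    unfolding S'_def by fastforce
  have "?gain - \<sigma> \<le> f S' - f S"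
    using f_swap_ge[OF xs S(1) CS] unfolding \<sigma>_def S'_def by linarith
  then have gain_le: "?gain \<le> (1 + 1 / \<beta>) * (f S' - f S)"
    and \<sigma>_le: "(1 + \<beta>) * \<sigma> \<le> (1 + 1 / \<beta>) * (f S' - f S)"
    using preemption_increment_bounds[OF \<beta>_pos accept[folded \<sigma>_def]] by auto
  have "(1 + \<beta>) * (\<Sum>u\<in>S. real (charge (set ys) u) * nu xs f S u)
      \<le> real k * ((1 + \<beta>) * \<sigma>) + (1 + \<beta>) * (\<Sum>u\<in>S'. real (charge P' u) * nu xs f S' u)"
    using mult_left_mono[OF sum_charge_accept_le[OF xs S CS nu_S'[unfolded S'_def]], of "1 + \<beta>"]
      \<beta>_pos
    unfolding \<sigma>_def S'_def P'_def by (simp add: algebra_simps)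
  moreover have "real k * ((1 + \<beta>) * \<sigma>) \<le> real k * ((1 + 1 / \<beta>) * (f S' - f S))"
    using \<sigma>_le by (simp add: mult_left_mono)
  ultimately have potential: "potential (set ys) S + ?gain \<le> potential P' S'"
    unfolding potential_def using gain_le by (simp add: algebra_simps)
  have "f (insert v A \<union> (T \<inter> P')) = f (insert v (A \<union> (T \<inter> set ys)))"
    unfolding P'_def by (rule arg_cong[where f = f]) auto
  also have "\<dots> \<le> f (A \<union> (T \<inter> set ys)) + ?gain"
    by (rule charging_inv_insert_le[OF xs inv])
  also have "\<dots> \<le> potential P' S'"
    using bound potential by linarith
  finally show ?thesis
    using inv nu_S' unfolding charging_inv_def S'_def P'_def by auto
qed

lemma sum_charge_reject_ge:
  assumes xs: "xs = ys @ v # zs" and "v \<in> T"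
    and S: "S \<subseteq> set ys" "\<forall>u\<in>S. 0 \<le> nu xs f S u" and C: "C = nbhd (set xs) E v \<inter> S"
  shows "(\<Sum>u\<in>S. real (charge (set ys) u) * nu xs f S u) + (\<Sum>u\<in>C. nu xs f S u)
    \<le> (\<Sum>u\<in>S. real (charge (insert v (set ys)) u) * nu xs f S u)"
proof -
  let ?P' = "insert v (set ys)"
  have fin: "finite S"
    using S(1) finite_subset by blast
  have CS: "C \<subseteq> S"
    using C by blast
  have charge_C: "charge ?P' u = Suc (charge (set ys) u)" if "u \<in> C" for u
  proof (rule charge_insert[OF \<open>v \<in> T\<close>])
    show "v \<notin> set ys" "E u v"
      using xs xs_distinct C that E_sym by (auto simp: nbhd_def)
    show "before xs u v"
      using xs xs_distinct before_append_Cons_iff[of ys v zs] S(1) CS that by auto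
  qed
  have "(\<Sum>u\<in>C. real (charge (set ys) u) * nu xs f S u) + (\<Sum>u\<in>C. nu xs f S u)
      = (\<Sum>u\<in>C. real (charge ?P' u) * nu xs f S u)"
    using charge_C by (simp add: sum.distrib[symmetric] algebra_simps)
  moreover have "(\<Sum>u\<in>S - C. real (charge (set ys) u) * nu xs f S u)
      \<le> (\<Sum>u\<in>S - C. real (charge ?P' u) * nu xs f S u)"
    using S(2) charge_mono[of "set ys" ?P'] by (intro sum_mono mult_right_mono) auto
  ultimately show ?thesis
    unfolding sum.subset_diff[OF CS fin] by linarith
qed

lemma charging_inv_reject:
  assumes xs: "xs = ys @ v # zs" and inv: "charging_inv (set ys) S A"
    and C: "C = nbhd (set xs) E v \<inter> S"
    and reject: "marg f S v < (1 + \<beta>) * (\<Sum>u\<in>C. nu xs f S u)"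
  shows "charging_inv (insert v (set ys)) S A"
proof -
  define P' where "P' = insert v (set ys)"
  have S: "S \<subseteq> set ys" "\<forall>u\<in>S. 0 \<le> nu xs f S u"
    and bound: "f (A \<union> (T \<inter> set ys)) \<le> potential (set ys) S"
    using inv by (auto simp: charging_inv_def)
  have "f (A \<union> (T \<inter> P')) \<le> potential P' S"
  proof (cases "v \<in> T")
    case True
    have "(1 + \<beta>) * ((\<Sum>u\<in>S. real (charge (set ys) u) * nu xs f S u) + (\<Sum>u\<in>C. nu xs f S u))
        \<le> (1 + \<beta>) * (\<Sum>u\<in>S. real (charge P' u) * nu xs f S u)"
      using sum_charge_reject_ge[OF xs True S C] \<beta>_pos unfolding P'_def
      by (intro mult_left_mono) auto
    then have "potential (set ys) S + marg f S v \<le> potential P' S"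
      using reject unfolding potential_def distrib_left by linarith
    moreover have "A \<union> (T \<inter> P') = insert v (A \<union> (T \<inter> set ys))"
      unfolding P'_def using True by auto
    ultimately show ?thesis
      using charging_inv_insert_le[OF xs inv] bound by simp
  next
    case False
    then have "A \<union> (T \<inter> P') = A \<union> (T \<inter> set ys)"
      unfolding P'_def by auto
    then show ?thesis
      using bound potential_mono[OF _ S(2), of "set ys" P'] unfolding P'_def by fastforce
  qed
  then show ?thesis
    using inv unfolding charging_inv_def P'_def by auto
qed

lemma charging_inv_pg_step:
  assumes "xs = ys @ v # zs" "charging_inv (set ys) S A"
  shows "\<exists>A'. charging_inv (insert v (set ys)) (pg_step E f \<beta> xs S v) A'"
proof -
  define C where "C = nbhd (set xs) E v \<inter> S"
  show ?thesis
  proof (cases "(1 + \<beta>) * (\<Sum>u\<in>C. nu xs f S u) \<le> marg f S v")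
    case True
    then have "pg_step E f \<beta> xs S v = insert v (S - C)"
      unfolding pg_step_def C_def by simp
    then show ?thesis
      using charging_inv_accept[OF assms C_def True] by auto
  next
    case False
    then have "pg_step E f \<beta> xs S v = S"
      unfolding pg_step_def C_def by simp
    then show ?thesis
      using charging_inv_reject[OF assms C_def] False by auto
  qed
qed

lemma charging_inv_fold:
  "xs = ys @ zs \<Longrightarrow> \<exists>A. charging_inv (set ys) (fold (\<lambda>v S. pg_step E f \<beta> xs S v) ys {}) A"
proof (induct ys arbitrary: zs rule: rev_induct)
  case Nil
  have "charging_inv {} {} {}"
    unfolding charging_inv_def potential_def using f_empty by simp
  then show ?case
    by auto
next
  case (snoc v ys)
  then obtain A where "charging_inv (set ys) (fold (\<lambda>v S. pg_step E f \<beta> xs S v) ys {}) A"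
    by fastforce
  then show ?case
    using charging_inv_pg_step[of ys v zs] snoc.prems by auto
qed

theorem preemptive_greedy_charging:
  "\<exists>A \<subseteq> set xs. f (A \<union> T) \<le> (real k * (1 + \<beta>) + 1) * (1 + 1 / \<beta>) * f (preemptive_greedy E f \<beta> xs)"
proof -
  define S where "S = preemptive_greedy E f \<beta> xs"
  obtain A where inv: "charging_inv (set xs) S A"
    using charging_inv_fold[of xs "[]"] unfolding S_def preemptive_greedy_def by auto
  then have "f (A \<union> T) \<le> potential (set xs) S"
    using T_subset unfolding charging_inv_def by (simp add: Int_absorb2)
  also have "\<dots> \<le> (real k * (1 + \<beta>) + 1) * (1 + 1 / \<beta>) * f S"
    using inv by (intro potential_le) (auto simp: charging_inv_def)
  finally show ?thesis
    using inv unfolding S_def charging_inv_def by blast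
qed

end

lemma rpg_run_charging:
  assumes "\<And>u v. E u v \<Longrightarrow> E v u" "distinct vs" "inductively_k_independent k E vs"
    and "submodular_on (set vs) f" "f {} = 0" "\<beta> > 0" "T \<subseteq> set vs" "indep_set E T"
  shows "\<exists>B \<subseteq> V' - T.
    f (B \<union> (T \<inter> V')) \<le> (real k * (1 + \<beta>) + 1) * (1 + 1 / \<beta>) * f (rpg_run E f \<beta> vs V')"
proof -
  let ?xs = "filter (\<lambda>v. v \<in> V') vs"
  interpret pg_analysis E ?xs f k \<beta> "T \<inter> V'"
  proof
    show "inductively_k_independent k E ?xs"
      using assms(2,3) by (rule inductively_k_independent_filter)
    show "submodular_on (set ?xs) f"
      using assms(4) by (rule submodular_on_subset) auto
    show "indep_set E (T \<inter> V')"
      using assms(8) by (auto simp: indep_set_def)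
  qed (use assms in auto)
  obtain A where "A \<subseteq> V'"
    "f (A \<union> (T \<inter> V')) \<le> (real k * (1 + \<beta>) + 1) * (1 + 1 / \<beta>) * f (rpg_run E f \<beta> vs V')"
    using preemptive_greedy_charging unfolding rpg_run_def by auto
  moreover from \<open>A \<subseteq> V'\<close> have "(A - T) \<union> (T \<inter> V') = A \<union> (T \<inter> V')"
    by auto
  ultimately show ?thesis
    by (intro exI[of _ "A - T"]) auto
qed

lemma sum_Pow_le_double_by_symdiff_pairing:
  fixes g h :: "'a set \<Rightarrow> real"
  assumes "finite V" "D \<subseteq> V"
    and "\<And>X. X \<subseteq> V \<Longrightarrow> h X \<le> g X + g (sym_diff X D)"
  shows "(\<Sum>X\<in>Pow V. h X) \<le> 2 * (\<Sum>X\<in>Pow V. g X)"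
proof -
  let ?p = "\<lambda>X. sym_diff X D"
  have "(\<Sum>X\<in>Pow V. g (?p X)) = (\<Sum>X\<in>Pow V. g X)"
    by (rule sum.reindex_bij_witness[where i = ?p and j = ?p]) (use assms(2) in auto)
  moreover have "(\<Sum>X\<in>Pow V. h X) \<le> (\<Sum>X\<in>Pow V. g X + g (?p X))"
    using assms(3) by (intro sum_mono) auto
  ultimately show ?thesis
    by (simp add: sum.distrib)
qed

lemma submodular_sum_Pow_inter_ge:
  assumes "finite V" "submodular_on V f" "f {} = 0" "T \<subseteq> V"
  shows "2 ^ card V * f T \<le> 2 * (\<Sum>X\<in>Pow V. f (T \<inter> X))"
proof -
  have "(\<Sum>X\<in>Pow V. f T) \<le> 2 * (\<Sum>X\<in>Pow V. f (T \<inter> X))"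
  proof (rule sum_Pow_le_double_by_symdiff_pairing[OF assms(1,4)])
    fix X
    have "T \<inter> X \<subseteq> V" "T - X \<subseteq> V"
      using assms(4) by auto
    then have "f ((T \<inter> X) \<union> (T - X)) + f ((T \<inter> X) \<inter> (T - X)) \<le> f (T \<inter> X) + f (T - X)"
      using assms(2) unfolding submodular_on_def by blast
    moreover have "(T \<inter> X) \<union> (T - X) = T" "(T \<inter> X) \<inter> (T - X) = {}" "T \<inter> sym_diff X T = T - X"
      by auto
    ultimately show "f T \<le> f (T \<inter> X) + f (T \<inter> sym_diff X T)"
      using assms(3) by simp
  qed
  then show ?thesis
    using assms(1) by (simp add: card_Pow)
qed

lemma submodular_sum_Pow_inter_le:
  fixes g :: "'a set \<Rightarrow> real"
  assumes "finite V" "submodular_on V f" "\<And>A. A \<subseteq> V \<Longrightarrow> 0 \<le> f A" "T \<subseteq> V"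
    and "\<And>X. X \<subseteq> V \<Longrightarrow> \<exists>B \<subseteq> X - T. f (B \<union> (T \<inter> X)) \<le> g X"
  shows "(\<Sum>X\<in>Pow V. f (T \<inter> X)) \<le> 2 * (\<Sum>X\<in>Pow V. g X)"
proof -
  have "\<forall>X. \<exists>B. X \<subseteq> V \<longrightarrow> B \<subseteq> X - T \<and> f (B \<union> (T \<inter> X)) \<le> g X"
    using assms(5) by blast
  from choice[OF this] obtain B
    where B: "\<And>X. X \<subseteq> V \<Longrightarrow> B X \<subseteq> X - T \<and> f (B X \<union> (T \<inter> X)) \<le> g X"
    by blast
  show ?thesis
  proof (rule sum_Pow_le_double_by_symdiff_pairing[OF assms(1), of "V - T"])
    fix X
    assume X: "X \<subseteq> V"
    let ?Y = "sym_diff X (V - T)"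
    have Y: "?Y \<subseteq> V" "T \<inter> ?Y = T \<inter> X"
      using X by auto
    have "B X \<subseteq> X - T" "B ?Y \<subseteq> (V - T) - X"
      using B[OF X] B[OF Y(1)] X by auto
    then have cap: "(B X \<union> (T \<inter> X)) \<inter> (B ?Y \<union> (T \<inter> X)) = T \<inter> X"
      and sub: "B X \<union> (T \<inter> X) \<subseteq> V" "B ?Y \<union> (T \<inter> X) \<subseteq> V"
      using X by auto
    have "f ((B X \<union> (T \<inter> X)) \<union> (B ?Y \<union> (T \<inter> X)))
        + f ((B X \<union> (T \<inter> X)) \<inter> (B ?Y \<union> (T \<inter> X)))
        \<le> f (B X \<union> (T \<inter> X)) + f (B ?Y \<union> (T \<inter> X))"
      using assms(2) sub unfolding submodular_on_def by blast
    moreover note cap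
    moreover have "0 \<le> f ((B X \<union> (T \<inter> X)) \<union> (B ?Y \<union> (T \<inter> X)))"
      using assms(3) sub by simp
    moreover have "f (B X \<union> (T \<inter> X)) \<le> g X" "f (B ?Y \<union> (T \<inter> X)) \<le> g ?Y"
      using B[OF X] B[OF Y(1)] unfolding Y(2) by auto
    ultimately show "f (T \<inter> X) \<le> g X + g ?Y"
      by simp
  qed auto
qed

theorem theorem7:
  fixes E :: "'a \<Rightarrow> 'a \<Rightarrow> bool" and vs :: "'a list" and f :: "'a set \<Rightarrow> real"
    and k :: nat and \<beta> :: real
  assumes "k \<ge> 1"
    and "distinct vs"
    and "\<And>u v. E u v \<Longrightarrow> E v u"
    and "\<And>v. \<not> E v v"
    and "inductively_k_independent k E vs"
    and "submodular_on (set vs) f"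
    and "\<And>A. A \<subseteq> set vs \<Longrightarrow> f A \<ge> 0"
    and "f {} = 0"
    and "\<beta> > 0"
  shows "(\<forall>V' \<subseteq> set vs. rpg_run E f \<beta> vs V' \<subseteq> set vs
             \<and> indep_set E (rpg_run E f \<beta> vs V'))
     \<and> (\<forall>T. T \<subseteq> set vs \<and> indep_set E T \<longrightarrow>
          f T \<le> 4 * (real k * (1 + \<beta>) + 1) * (1 + 1 / \<beta>) * rpg_expected_value E f \<beta> vs)"
proof -
  let ?c = "(real k * (1 + \<beta>) + 1) * (1 + 1 / \<beta>)"
  have "f T \<le> 4 * (real k * (1 + \<beta>) + 1) * (1 + 1 / \<beta>) * rpg_expected_value E f \<beta> vs"
    if T: "T \<subseteq> set vs" "indep_set E T" for T
  proof -
    have "2 ^ length vs * f T \<le> 2 * (\<Sum>X\<in>Pow (set vs). f (T \<inter> X))"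
      using submodular_sum_Pow_inter_ge[OF _ assms(6,8) T(1)] assms(2) by (simp add: distinct_card)
    also have "\<dots> \<le> 2 * (2 * (\<Sum>X\<in>Pow (set vs). ?c * f (rpg_run E f \<beta> vs X)))"
      using submodular_sum_Pow_inter_le[OF finite_set assms(6,7) T(1)]
        rpg_run_charging[OF assms(3,2,5,6,8,9) T] by simp
    also have "\<dots> = 2 ^ length vs
        * (4 * (real k * (1 + \<beta>) + 1) * (1 + 1 / \<beta>) * rpg_expected_value E f \<beta> vs)"
      unfolding rpg_expected_value_def sum_distrib_left[symmetric] by simp
    finally show ?thesis
      by simp
  qed
  moreover have "rpg_run E f \<beta> vs V' \<subseteq> set vs \<and> indep_set E (rpg_run E f \<beta> vs V')" for V'
    using preemptive_greedy_indep[of E, OF assms(3,4), of f \<beta> "filter (\<lambda>v. v \<in> V') vs"]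
    unfolding rpg_run_def by (meson filter_is_subset order_trans)
  ultimately show ?thesis
    by blast
qed

end
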